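(* Let $R$ be an associative ring with identity and $a,b,c,d\in R$ such that $a$ has a $(b,c)$-inverse $a^{\|(b,c)}$. Let $b^{-}$ be any (fixed) inner inverse of $b$ and put $e=bb^{-}$. Then the following are equivalent: (i) $d$ has a $(b,c)$-inverse; (ii) $e\in ea^{\|(b,c)}deR\cap Rea^{\|(b,c)}de$; (iii) $a^{\|(b,c)}de+1-e$ is invertible in $R$. In this case $d^{\|(b,c)}=(a^{\|(b,c)}de+1-e)^{-1}a^{\|(b,c)}$.
   Context: For $a,b,c\in R$, $a$ is $(b,c)$-invertible if there exists $y\in R$ with $y\in (bRy)\cap(yRc)$, $yab=b$ and $cay=c$; such $y$ is unique and denoted $a^{\|(b,c)}$. An inner inverse of $b$ is an element $b^{-}$ with $bb^{-}b=b$ (it exists here since $b$ is regular whenever a $(b,c)$-inverse exists). *)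

theory Defs
  imports Main
begin

definition is_bc_inverse :: "'a::ring_1 \<Rightarrow> 'a \<Rightarrow> 'a \<Rightarrow> 'a \<Rightarrow> bool" where
  "is_bc_inverse a b c y \<longleftrightarrow>
     (\<exists>r. y = b * r * y) \<and> (\<exists>s. y = y * s * c) \<and> y * a * b = b \<and> c * a * y = c"

definition bc_invertible :: "'a::ring_1 \<Rightarrow> 'a \<Rightarrow> 'a \<Rightarrow> bool" where
  "bc_invertible a b c \<longleftrightarrow> (\<exists>y. is_bc_inverse a b c y)"

definition bc_inv :: "'a::ring_1 \<Rightarrow> 'a \<Rightarrow> 'a \<Rightarrow> 'a" where
  "bc_inv a b c = (THE y. is_bc_inverse a b c y)"

definition ring_invertible :: "'a::ring_1 \<Rightarrow> bool" where
  "ring_invertible x \<longleftrightarrow> (\<exists>z. z * x = 1 \<and> x * z = 1)"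

definition ring_inv :: "'a::ring_1 \<Rightarrow> 'a" where
  "ring_inv x = (THE z. z * x = 1 \<and> x * z = 1)"

end

theory Submission
  imports Defs
begin

text \<open>Let y be the (b,c)-inverse of a, w = y d e and u = w + 1 - e. Since e y = y and w e = w,
  the element w lies in the corner ring eRe, and u is a unit of R iff w is a unit of eRe, which
  is condition (ii). If x is a (b,c)-inverse of d, then x a e + 1 - e is the inverse of u.
  Conversely, if u has inverse v, then v commutes with e, and v y satisfies the
  defining equations of a (b,c)-inverse of d; e.g. u e = w turns v y d b into e b = b.\<close>

lemma is_bc_inverse_left_absorb:
  fixes a b c y t :: "'a::ring_1"
  assumes "is_bc_inverse a b c y" "t * b = b"
  shows "t * y = y"
proof -
  obtain r where "y = b * r * y" using assms(1) unfolding is_bc_inverse_def by blast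
  then show ?thesis using assms(2) by (metis mult.assoc)
qed

lemma is_bc_inverse_right_absorb:
  fixes a b c y t :: "'a::ring_1"
  assumes "is_bc_inverse a b c y" "c * t = c"
  shows "y * t = y"
proof -
  obtain s where "y = y * s * c" using assms(1) unfolding is_bc_inverse_def by blast
  then show ?thesis using assms(2) by (metis mult.assoc)
qed

lemma is_bc_inverse_unique:
  fixes a b c x x' :: "'a::ring_1"
  assumes x: "is_bc_inverse a b c x" and x': "is_bc_inverse a b c x'"
  shows "x = x'"
proof -
  have "x' * a * b = b" "c * a * x = c" using x x' unfolding is_bc_inverse_def by auto
  then have "x' * a * x = x" "x' * (a * x) = x'"
    using is_bc_inverse_left_absorb[OF x, of "x' * a"] is_bc_inverse_right_absorb[OF x', of "a * x"]
    by (simp_all add: mult.assoc)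
  then show ?thesis by (simp add: mult.assoc)
qed

lemma bc_inv_eqI:
  fixes a b c x :: "'a::ring_1"
  assumes "is_bc_inverse a b c x"
  shows "bc_inv a b c = x"
  unfolding bc_inv_def using assms is_bc_inverse_unique by (metis the_equality)

lemma ring_inv_eqI:
  fixes u z :: "'a::ring_1"
  assumes "z * u = 1" "u * z = 1"
  shows "ring_inv u = z"
  unfolding ring_inv_def
proof (rule the_equality)
  fix z' assume "z' * u = 1 \<and> u * z' = 1"
  then show "z' = z" using assms(2) by (metis mult.assoc mult_1_left mult_1_right)
qed (use assms in simp)

lemma ring_invertibleI:
  fixes u v v' :: "'a::ring_1"
  assumes "v' * u = 1" "u * v = 1"
  shows "ring_invertible u"
proof -
  have "v' = v" using assms by (metis mult.assoc mult_1_left mult_1_right)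
  then show ?thesis unfolding ring_invertible_def using assms by blast
qed

lemma inverse_commute:
  fixes u z e :: "'a::ring_1"
  assumes "z * u = 1" "u * z = 1" "e * u = u * e"
  shows "z * e = e * z"
proof -
  have "z * e = z * (e * u) * z" using assms(2) by (simp add: mult.assoc)
  also have "\<dots> = (z * u) * e * z" using assms(3) by (simp add: mult.assoc)
  finally show ?thesis using assms(1) by simp
qed

lemma corner_plus_complement_invertible_iff:
  fixes e w :: "'a::ring_1"
  assumes ee: "e * e = e" and ew: "e * w = w" and we: "w * e = w"
  shows "ring_invertible (w + 1 - e) \<longleftrightarrow> (\<exists>r. e = w * r) \<and> (\<exists>s. e = s * w)"
proof
  have eu: "e * (w + 1 - e) = w" and ue: "(w + 1 - e) * e = w"
    using ee ew we by (simp_all add: algebra_simps)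
  assume "ring_invertible (w + 1 - e)"
  then obtain z where "z * (w + 1 - e) = 1" "(w + 1 - e) * z = 1"
    unfolding ring_invertible_def by blast
  then have "e = w * z" "e = z * w"
    by (metis eu ue mult.assoc mult_1_left mult_1_right)+
  then show "(\<exists>r. e = w * r) \<and> (\<exists>s. e = s * w)" by blast
next
  assume "(\<exists>r. e = w * r) \<and> (\<exists>s. e = s * w)"
  then obtain r s where r: "e = w * r" and s: "e = s * w" by blast
  have "(w + 1 - e) * (e * r * e + 1 - e) = (w * r) * e + 1 - e"
    using ee we by (simp add: algebra_simps flip: mult.assoc)
  moreover have "(e * s * e + 1 - e) * (w + 1 - e) = e * (s * w) + 1 - e"
    using ee ew by (simp add: algebra_simps mult.assoc)
  ultimately show "ring_invertible (w + 1 - e)"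
    using ring_invertibleI r s ee by (metis add_diff_cancel_left')
qed

lemma inner_inverse_idempotent:
  fixes b b' :: "'a::ring_1"
  assumes "b * b' * b = b"
  shows "b * b' * (b * b') = b * b'"
  using assms by (metis mult.assoc)

lemma is_bc_inverse_unit_mult_eq_one:
  fixes a b c d b' e x y :: "'a::ring_1"
  assumes y: "is_bc_inverse a b c y" and x: "is_bc_inverse d b c x"
    and hb': "b * b' * b = b" and he: "e = b * b'"
  shows "(y * d * e + 1 - e) * (x * a * e + 1 - e) = 1"
proof -
  have ee: "e * e = e" using inner_inverse_idempotent[OF hb'] he by simp
  have ex: "e * x = x" using is_bc_inverse_left_absorb[OF x] hb' he by simp
  have "c * (d * x) = c" using x unfolding is_bc_inverse_def by (simp add: mult.assoc)
  then have ydx: "y * d * x = y" using is_bc_inverse_right_absorb[OF y] by (simp add: mult.assoc)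
  have yae: "y * a * e = e" using y he unfolding is_bc_inverse_def by (metis mult.assoc)
  have "(y * d * e + 1 - e) * (x * a * e + 1 - e)
      = y * d * (e * x) * a * e + y * d * (e - e * e) + (x - e * x) * a * e + (1 - e) * (1 - e)"
    by (simp add: algebra_simps)
  also have "\<dots> = 1" using ee ex ydx yae by (simp add: algebra_simps)
  finally show ?thesis .
qed

lemma is_bc_inverse_of_unit:
  fixes a b c d b' e y z :: "'a::ring_1"
  assumes y: "is_bc_inverse a b c y" and hb': "b * b' * b = b" and he: "e = b * b'"
    and zu: "z * (y * d * e + 1 - e) = 1" and uz: "(y * d * e + 1 - e) * z = 1"
  shows "is_bc_inverse d b c (z * y)"
proof -
  define u where "u = y * d * e + 1 - e"
  have ee: "e * e = e" using inner_inverse_idempotent[OF hb'] he by simp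
  have eb: "e * b = b" using hb' he by simp
  have ey: "e * y = y" using is_bc_inverse_left_absorb[OF y eb] .
  have "y * d * e * e = y * d * e" "e * (y * d * e) = y * d * e" using ee ey by (metis mult.assoc)+
  then have ue: "u * e = y * d * e" and "e * u = y * d * e"
    unfolding u_def using ee by (simp_all add: algebra_simps)
  then have "e * u = u * e" by simp
  then have ze: "z * e = e * z" using inverse_commute zu uz unfolding u_def by blast
  have ex: "e * (z * y) = z * y" using ze ey by (metis mult.assoc)
  obtain s where s: "y = y * s * c" using y unfolding is_bc_inverse_def by blast
  have cay: "c * a * y = c" using y unfolding is_bc_inverse_def by blast
  have "z * y * d * b = z * (u * e) * b"
    using eb ue by (simp add: mult.assoc)
  also have "\<dots> = b" using zu eb unfolding u_def by (metis mult.assoc mult_1_left)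
  finally have xdb: "z * y * d * b = b" .
  have cau: "c * a * u = c * d * e + c * a * (1 - e)"
    unfolding u_def using cay by (simp add: algebra_simps flip: mult.assoc)
  have "c = (c * a * u) * z * y" using cay uz unfolding u_def by (simp add: mult.assoc)
  also have "\<dots> = c * d * (e * z * y) + c * a * (z * (y - e * y))"
    unfolding cau using ze by (simp add: algebra_simps flip: mult.assoc)
  also have "\<dots> = c * d * (z * y)" using ey ex by (simp add: mult.assoc)
  finally have cdx: "c * d * (z * y) = c" by simp
  show ?thesis unfolding is_bc_inverse_def
    using ex he s xdb cdx by (metis mult.assoc)
qed

theorem theorem3p13:
  fixes a b c d b' e :: "'a::ring_1"
  assumes ha: "bc_invertible a b c"
    and hb': "b * b' * b = b"
    and he: "e = b * b'"
  shows "(bc_invertible d b c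
            \<longleftrightarrow> ((\<exists>r. e = e * bc_inv a b c * d * e * r) \<and>
                 (\<exists>s. e = s * e * bc_inv a b c * d * e)))
       \<and> (bc_invertible d b c \<longleftrightarrow> ring_invertible (bc_inv a b c * d * e + 1 - e))
       \<and> (bc_invertible d b c \<longrightarrow>
            bc_inv d b c = ring_inv (bc_inv a b c * d * e + 1 - e) * bc_inv a b c)"
proof -
  obtain y where y: "is_bc_inverse a b c y" using ha unfolding bc_invertible_def by blast
  have ee: "e * e = e" using inner_inverse_idempotent[OF hb'] he by simp
  have ey: "e * y = y" using is_bc_inverse_left_absorb[OF y] hb' he by simp
  have "e * (y * d * e) = y * d * e" "y * d * e * e = y * d * e"
    using ee ey by (metis mult.assoc)+
  then have corner: "ring_invertible (y * d * e + 1 - e)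
      \<longleftrightarrow> (\<exists>r. e = e * y * d * e * r) \<and> (\<exists>s. e = s * e * y * d * e)"
    using corner_plus_complement_invertible_iff[OF ee, of "y * d * e"] ey
    by (simp add: mult.assoc)
  have unit: "ring_invertible (y * d * e + 1 - e)" if "is_bc_inverse d b c x" for x
    using ring_invertibleI is_bc_inverse_unit_mult_eq_one[OF y that hb' he]
      is_bc_inverse_unit_mult_eq_one[OF that y hb' he] by blast
  have inverse: "is_bc_inverse d b c (ring_inv (y * d * e + 1 - e) * y)"
    if "ring_invertible (y * d * e + 1 - e)"
    using that is_bc_inverse_of_unit[OF y hb' he] ring_inv_eqI
    unfolding ring_invertible_def by metis
  show ?thesis
    unfolding bc_inv_eqI[OF y] using corner unit inverse bc_inv_eqI
    unfolding bc_invertible_def by blast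
qed

end
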